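(* For every positive integer $k$, as formal power series in $q$, $$\sum_{n\ge1}\mathrm{spt}k_{do}(n)\,q^n=V_k(q)\,(-q^2;q^2)_\infty+W_k(q)\,(-q;q^2)_\infty+2(-q)^k(q^2;q^2)_{k-1},$$ where $V_1(q)=2q$, $V_k(q)=(q^{2k-1}-q)V_{k-1}(q)+2q^k$ for $k>1$, and $W_1(q)=q$, $W_k(q)=(q^{2k-1}-q)W_{k-1}(q)+q^{2k-1}$ for $k>1$.
   Context: For a partition $\pi$, $s(\pi)$ is its smallest part. $\mathrm{Spt}k_{do}(n)$ is the set of partitions $\pi$ of $n$ in which $s(\pi)$ occurs exactly $k$ times and the remaining parts (those larger than $s(\pi)$) are pairwise distinct and each has parity different from that of $s(\pi)$; $\mathrm{spt}k_{do}(n)=|\mathrm{Spt}k_{do}(n)|$. Notation: $(a;q)_0=1$, $(a;q)_n=\prod_{j=0}^{n-1}(1-aq^j)$, $(a;q)_\infty=\prod_{j\ge0}(1-aq^j)$. *)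

theory Defs
  imports "HOL-Computational_Algebra.Formal_Power_Series" "HOL-Library.Multiset"
begin

definition Sptk_do :: "nat \<Rightarrow> nat \<Rightarrow> nat multiset set" where
  "Sptk_do k n = {M. (\<forall>x\<in>#M. 0 < x) \<and> sum_mset M = n \<and> M \<noteq> {#} \<and>
      count M (Min (set_mset M)) = k \<and>
      (\<forall>x\<in>#M. x \<noteq> Min (set_mset M) \<longrightarrow>
          count M x = 1 \<and> x mod 2 \<noteq> Min (set_mset M) mod 2)}"

definition sptk_do :: "nat \<Rightarrow> nat \<Rightarrow> nat" where
  "sptk_do k n = card (Sptk_do k n)"

text \<open>Infinite product of formal power series, as the limit of the partial products
  in the standard (X-adic) metric topology on formal power series.\<close>
definition fps_infprod :: "(nat \<Rightarrow> int fps) \<Rightarrow> int fps" where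
  "fps_infprod f = lim (\<lambda>N. \<Prod>j<N. f j)"

fun V :: "nat \<Rightarrow> int fps" where
  "V 0 = 0"
| "V (Suc 0) = 2 * fps_X"
| "V (Suc (Suc k)) = (fps_X ^ (2 * (k + 2) - 1) - fps_X) * V (Suc k) + 2 * fps_X ^ (k + 2)"

fun W :: "nat \<Rightarrow> int fps" where
  "W 0 = 0"
| "W (Suc 0) = fps_X"
| "W (Suc (Suc k)) = (fps_X ^ (2 * (k + 2) - 1) - fps_X) * W (Suc k) + fps_X ^ (2 * (k + 2) - 1)"

end

theory Submission
  imports Defs
begin

(* Splitting off the smallest part s, the generating function is
   sum_s q^(k s) prod_(t > s, t of parity opposite to s) (1 + q^t).
   Writing s = 2m+1 or s = 2m+2, each half has the form q^(a k) sum_m u^(k m) T_m with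
   u = q^2 and tail products T_m = (1 + b u^(m+1)) T_(m+1), b = 1 or b = q.
   Such sums telescope: the sum for k+1 is (q^(2k+1) - q) times the sum for k, plus a
   multiple of the full product, plus a boundary term that matters only for k = 0.
   Unrolling this recurrence produces V_k, W_k and the polynomial (-q)^k (q^2;q^2)_(k-1).
   All identities are proved for truncated sums (smallest part at most 2M, larger parts
   at most 2M+1), which already determine the coefficients below 2M. *)

unbundle fps_syntax

definition fps_cong :: "nat \<Rightarrow> 'a::comm_ring_1 fps \<Rightarrow> 'a fps \<Rightarrow> bool" where
  "fps_cong N f g \<longleftrightarrow> fps_X ^ N dvd f - g"

lemma fps_X_power_dvd_iff: "fps_X ^ N dvd (f :: 'a::comm_ring_1 fps) \<longleftrightarrow> (\<forall>i<N. f $ i = 0)"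
proof
  assume "fps_X ^ N dvd f"
  then show "\<forall>i<N. f $ i = 0" by (auto elim!: dvdE simp: fps_X_power_mult_nth)
next
  assume "\<forall>i<N. f $ i = 0"
  then have "f = fps_X ^ N * fps_shift N f"
    by (intro fps_ext) (simp add: fps_X_power_mult_nth)
  then show "fps_X ^ N dvd f" by (metis dvd_triv_left)
qed

lemma fps_cong_iff_nth: "fps_cong N f g \<longleftrightarrow> (\<forall>i<N. f $ i = g $ i)"
  by (simp add: fps_cong_def fps_X_power_dvd_iff)

lemma fps_cong_refl [simp]: "fps_cong N f f"
  by (simp add: fps_cong_def)

lemma fps_cong_sym: "fps_cong N f g \<Longrightarrow> fps_cong N g f"
  by (simp add: fps_cong_iff_nth)

lemma fps_cong_trans [trans]: "fps_cong N f g \<Longrightarrow> fps_cong N g h \<Longrightarrow> fps_cong N f h"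
  by (simp add: fps_cong_iff_nth)

lemma fps_cong_add: "fps_cong N f g \<Longrightarrow> fps_cong N f' g' \<Longrightarrow> fps_cong N (f + f') (g + g')"
  by (simp add: fps_cong_iff_nth)

lemma fps_cong_diff: "fps_cong N f g \<Longrightarrow> fps_cong N f' g' \<Longrightarrow> fps_cong N (f - f') (g - g')"
  by (simp add: fps_cong_iff_nth)

lemma fps_cong_mult: "fps_cong N f g \<Longrightarrow> fps_cong N f' g' \<Longrightarrow> fps_cong N (f * f') (g * g')"
  unfolding fps_cong_def
proof -
  assume "fps_X ^ N dvd f - g" "fps_X ^ N dvd f' - g'"
  then have "fps_X ^ N dvd (f - g) * f' + g * (f' - g')" by simp
  then show "fps_X ^ N dvd f * f' - g * g'" by (simp add: algebra_simps)
qed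

lemma fps_cong_mono: "fps_cong N f g \<Longrightarrow> M \<le> N \<Longrightarrow> fps_cong M f g"
  by (simp add: fps_cong_iff_nth)

lemma fps_cong_add_X_power_mult: "N \<le> d \<Longrightarrow> fps_cong N (f + fps_X ^ d * h) f"
  by (simp add: fps_cong_iff_nth fps_X_power_mult_nth)

lemma fps_cong_one_plus_X_power: "N \<le> d \<Longrightarrow> fps_cong N (1 + fps_X ^ d) 1"
  using fps_cong_add_X_power_mult[of N d 1 1] by simp

lemma fps_cong_imp_eq: "(\<And>N. fps_cong N f g) \<Longrightarrow> f = g"
  by (intro fps_ext) (meson fps_cong_iff_nth lessI)

lemma fps_cong_fps_infprod:
  fixes f :: "nat \<Rightarrow> int fps"
  assumes "\<And>j. fps_cong (Suc j) (f j) 1"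
  shows "fps_cong N (fps_infprod f) (\<Prod>j<N. f j)"
proof -
  define P where "P n = (\<Prod>j<n. f j)" for n
  have stable: "fps_cong n (P n') (P n)" if "n \<le> n'" for n n'
    using that
  proof (induction n' rule: dec_induct)
    case (step n')
    have "fps_cong n (f n') 1"
      using fps_cong_mono[OF assms[of n']] step.hyps(1) by simp
    then have "fps_cong n (P n' * f n') (P n * 1)"
      using step.IH by (rule fps_cong_mult[rotated])
    then show ?case by (simp add: P_def)
  qed simp
  define L where "L = Abs_fps (\<lambda>i. P (Suc i) $ i)"
  have "P \<longlonglongrightarrow> L"
  proof (rule tendsto_fpsI)
    fix i
    have "P n $ i = L $ i" if "Suc i \<le> n" for n
      using stable[OF that] by (simp add: fps_cong_iff_nth L_def)
    then show "\<forall>\<^sub>F n in sequentially. P n $ i = L $ i"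
      by (rule eventually_sequentiallyI)
  qed
  then have "fps_infprod f = L"
    by (simp add: fps_infprod_def P_def[abs_def] limI)
  moreover have "fps_cong N L (P N)"
    unfolding fps_cong_iff_nth
  proof (intro allI impI)
    fix i assume "i < N"
    then show "L $ i = P N $ i" using stable[of "Suc i" N] by (simp add: fps_cong_iff_nth L_def)
  qed
  ultimately show ?thesis by (simp add: P_def)
qed

lemma fps_prod_one_plus_X_power_nth:
  assumes "finite A"
  shows "(\<Prod>t\<in>A. 1 + fps_X ^ t :: 'a::comm_semiring_1 fps) $ n = of_nat (card {B. B \<subseteq> A \<and> \<Sum>B = n})"
proof -
  have "(\<Prod>t\<in>A. 1 + fps_X ^ t :: 'a fps) = (\<Sum>B\<in>Pow A. fps_X ^ \<Sum>B)"
    using prod_add[OF assms, of "\<lambda>t. fps_X ^ t" "\<lambda>_. 1"] by (simp add: add.commute power_sum)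
  then have "(\<Prod>t\<in>A. 1 + fps_X ^ t :: 'a fps) $ n = (\<Sum>B\<in>Pow A. if \<Sum>B = n then 1 else 0)"
    by (simp add: fps_sum_nth eq_commute)
  also have "\<dots> = of_nat (card {B \<in> Pow A. \<Sum>B = n})"
    using assms by (simp add: sum.inter_filter[symmetric])
  finally show ?thesis by (simp add: Pow_def conj_commute)
qed

lemma sum_telescoping_tail_products:
  fixes b u :: "'a::comm_ring_1" and T :: "nat \<Rightarrow> 'a"
  assumes T: "\<And>m. m < M \<Longrightarrow> T m = (1 + b * u ^ Suc m) * T (Suc m)"
  shows "b * (\<Sum>m<M. u ^ ((j + 1) * m) * T m) = (1 + b) * T 0
     + (u ^ j - 1) * (\<Sum>m<M. u ^ (j * m) * T m) - (u ^ (j * M) + b * u ^ ((j + 1) * M)) * T M"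
proof -
  define D where "D m = (u ^ (j * m) + b * u ^ ((j + 1) * m)) * T m" for m
  have "b * (u ^ ((j + 1) * m) * T m) - (u ^ j - 1) * (u ^ (j * m) * T m) = D m - D (Suc m)"
    if "m < M" for m
    unfolding D_def T[OF that] by (simp add: algebra_simps power_add power_mult_distrib)
  then have "b * (\<Sum>m<M. u ^ ((j + 1) * m) * T m) - (u ^ j - 1) * (\<Sum>m<M. u ^ (j * m) * T m)
      = D 0 - D M"
    by (simp add: sum_distrib_left sum_subtractf[symmetric] sum_lessThan_telescope')
  then show ?thesis by (simp add: D_def algebra_simps)
qed

lemma fps_cong_recurrence_solution:
  fixes G R e :: "nat \<Rightarrow> 'a::comm_ring_1 fps"
  assumes G: "\<And>k. fps_cong N (G (Suc k))
      (e k * P + (fps_X ^ (2 * k + 1) - fps_X) * G k - (if k = 0 then fps_X else 0))"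
    and R0: "R 0 = 0"
    and R: "\<And>k. R (Suc k) = (fps_X ^ (2 * k + 1) - fps_X) * R k + e k"
  shows "fps_cong N (G (Suc k)) (R (Suc k) * P + (- fps_X) ^ Suc k * (\<Prod>j<k. 1 - fps_X ^ (2 * j + 2)))"
proof (induction k)
  case 0
  then show ?case using G[of 0] by (simp add: R R0)
next
  case (Suc k)
  define a where "a = fps_X ^ (2 * Suc k + 1) - (fps_X :: 'a fps)"
  have a_eq: "a = - fps_X * (1 - fps_X ^ (2 * k + 2))"
    by (simp add: a_def algebra_simps)
  have "fps_cong N (G (Suc (Suc k))) (e (Suc k) * P + a * G (Suc k))"
    using G[of "Suc k"] by (simp add: a_def)
  also have "fps_cong N \<dots> (e (Suc k) * P
      + a * (R (Suc k) * P + (- fps_X) ^ Suc k * (\<Prod>j<k. 1 - fps_X ^ (2 * j + 2))))"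
    by (intro fps_cong_add fps_cong_mult fps_cong_refl Suc.IH)
  also have "\<dots> = R (Suc (Suc k)) * P + (- fps_X) ^ Suc (Suc k) * (\<Prod>j<Suc k. 1 - fps_X ^ (2 * j + 2))"
    unfolding R[of "Suc k"] by (simp add: a_def[symmetric] a_eq algebra_simps)
  finally show ?case .
qed

lemma V_Suc: "V (Suc k) = (fps_X ^ (2 * k + 1) - fps_X) * V k + 2 * fps_X ^ Suc k"
proof (cases k)
  case (Suc k')
  have "2 * (k' + 2) - 1 = 2 * k + 1" using Suc by simp
  then show ?thesis using Suc by simp
qed simp

lemma W_Suc: "W (Suc k) = (fps_X ^ (2 * k + 1) - fps_X) * W k + fps_X ^ (2 * k + 1)"
proof (cases k)
  case (Suc k')
  have "2 * (k' + 2) - 1 = 2 * k + 1" using Suc by simp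
  then show ?thesis using Suc by simp
qed simp

(* Partitions counted by sptk_do whose smallest part is 2m+1 (resp. 2m+2) with m < M
   and whose other parts are at most 2M+1. *)
definition gf_odd_smallest :: "nat \<Rightarrow> nat \<Rightarrow> int fps" where
  "gf_odd_smallest k M = (\<Sum>m<M. fps_X ^ (k * (2 * m + 1)) * (\<Prod>i\<in>{m..<M}. 1 + fps_X ^ (2 * i + 2)))"

definition gf_even_smallest :: "nat \<Rightarrow> nat \<Rightarrow> int fps" where
  "gf_even_smallest k M = (\<Sum>m<M. fps_X ^ (k * (2 * m + 2)) * (\<Prod>i\<in>{m..<M}. 1 + fps_X ^ (2 * i + 3)))"

lemma gf_odd_smallest_Suc:
  "gf_odd_smallest (Suc k) M = 2 * fps_X ^ Suc k * (\<Prod>i<M. 1 + fps_X ^ (2 * i + 2))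
     + (fps_X ^ (2 * k + 1) - fps_X) * gf_odd_smallest k M
     - fps_X ^ Suc k * (fps_X ^ (2 * k * M) + fps_X ^ (2 * (k + 1) * M))"
proof -
  define u :: "int fps" where "u = fps_X ^ 2"
  define T where "T m = (\<Prod>i\<in>{m..<M}. 1 + fps_X ^ (2 * i + 2) :: int fps)" for m
  define S where "S j = (\<Sum>m<M. u ^ (j * m) * T m)" for j
  have X_power_eq: "fps_X ^ (2 * n) = u ^ n" for n
    by (simp add: u_def power_mult)
  have "T m = (1 + 1 * u ^ Suc m) * T (Suc m)" if "m < M" for m
  proof -
    have "T m = (1 + fps_X ^ (2 * Suc m)) * T (Suc m)"
      unfolding T_def using that by (simp add: prod.atLeast_Suc_lessThan)
    then show ?thesis by (simp only: X_power_eq mult_1)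
  qed
  from sum_telescoping_tail_products[OF this, where j = k]
  have S_Suc: "S (Suc k) = 2 * T 0 + (u ^ k - 1) * S k - (u ^ (k * M) + u ^ ((k + 1) * M))"
    by (simp add: S_def T_def)
  have gf: "gf_odd_smallest j M = fps_X ^ j * S j" for j
  proof -
    have "fps_X ^ (j * (2 * m + 1)) = fps_X ^ j * u ^ (j * m)" for m
    proof -
      have "j * (2 * m + 1) = j + 2 * (j * m)" by (simp add: algebra_simps)
      then show ?thesis by (simp only: X_power_eq power_add)
    qed
    then show ?thesis
      by (simp add: gf_odd_smallest_def S_def T_def sum_distrib_left mult.assoc)
  qed
  have factor: "fps_X ^ Suc k * (u ^ k - 1) = (fps_X ^ (2 * k + 1) - fps_X) * fps_X ^ k"
    by (simp add: algebra_simps power_add flip: X_power_eq)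
  have "gf_odd_smallest (Suc k) M = 2 * fps_X ^ Suc k * T 0 + (fps_X ^ Suc k * (u ^ k - 1)) * S k
      - fps_X ^ Suc k * (u ^ (k * M) + u ^ ((k + 1) * M))"
    unfolding gf S_Suc by (simp add: algebra_simps)
  then show ?thesis
    unfolding factor by (simp add: gf T_def atLeast0LessThan mult.assoc flip: X_power_eq)
qed

lemma gf_even_smallest_Suc:
  "gf_even_smallest (Suc k) M = fps_X ^ (2 * k + 1) * (\<Prod>i<Suc M. 1 + fps_X ^ (2 * i + 1))
     + (fps_X ^ (2 * k + 1) - fps_X) * gf_even_smallest k M
     - fps_X ^ (2 * k + 1) * (fps_X ^ (2 * k * M) + fps_X * fps_X ^ (2 * (k + 1) * M))"
proof -
  define u :: "int fps" where "u = fps_X ^ 2"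
  define T where "T m = (\<Prod>i\<in>{m..<M}. 1 + fps_X ^ (2 * i + 3) :: int fps)" for m
  define S where "S j = (\<Sum>m<M. u ^ (j * m) * T m)" for j
  have X_power_eq: "fps_X ^ (2 * n) = u ^ n" for n
    by (simp add: u_def power_mult)
  have "T m = (1 + fps_X * u ^ Suc m) * T (Suc m)" if "m < M" for m
  proof -
    have "T m = (1 + fps_X ^ (2 * m + 3)) * T (Suc m)"
      unfolding T_def using that by (rule prod.atLeast_Suc_lessThan)
    moreover have "2 * m + 3 = Suc (2 * Suc m)" by simp
    ultimately show ?thesis by (simp only: X_power_eq power_Suc)
  qed
  from sum_telescoping_tail_products[OF this, where j = k]
  have S_Suc: "fps_X * S (Suc k) = (1 + fps_X) * T 0 + (u ^ k - 1) * S k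
      - (u ^ (k * M) + fps_X * u ^ ((k + 1) * M))"
    by (simp add: S_def T_def)
  have gf: "gf_even_smallest j M = u ^ j * S j" for j
  proof -
    have "fps_X ^ (j * (2 * m + 2)) = u ^ j * u ^ (j * m)" for m
    proof -
      have "j * (2 * m + 2) = 2 * j + 2 * (j * m)" by (simp add: algebra_simps)
      then show ?thesis by (simp only: X_power_eq power_add)
    qed
    then show ?thesis
      by (simp add: gf_even_smallest_def S_def T_def sum_distrib_left mult.assoc)
  qed
  have u_Suc: "u ^ Suc k = fps_X ^ (2 * k + 1) * fps_X"
    unfolding X_power_eq[symmetric] by (simp add: power_Suc2)
  have factor: "fps_X ^ (2 * k + 1) * (u ^ k - 1) = (fps_X ^ (2 * k + 1) - fps_X) * u ^ k"
    by (simp add: algebra_simps power_add flip: X_power_eq)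
  have T0: "(1 + fps_X) * T 0 = (\<Prod>i<Suc M. 1 + fps_X ^ (2 * i + 1))"
    unfolding T_def atLeast0LessThan prod.lessThan_Suc_shift by (simp add: numeral_3_eq_3)
  have "gf_even_smallest (Suc k) M = fps_X ^ (2 * k + 1) * ((1 + fps_X) * T 0)
      + (fps_X ^ (2 * k + 1) * (u ^ k - 1)) * S k
      - fps_X ^ (2 * k + 1) * (u ^ (k * M) + fps_X * u ^ ((k + 1) * M))"
    unfolding gf u_Suc mult.assoc S_Suc by (simp add: algebra_simps)
  then show ?thesis
    unfolding factor T0 by (simp add: gf mult.assoc flip: X_power_eq)
qed

lemma fps_cong_boundary_term:
  "fps_cong (2 * M) (f * (fps_X ^ (2 * k * M) + g * fps_X ^ (2 * (k + 1) * M))) (if k = 0 then f else 0)"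
proof (cases k)
  case 0
  have "fps_cong (2 * M) (f + fps_X ^ (2 * M) * (f * g)) f"
    by (rule fps_cong_add_X_power_mult) simp
  then show ?thesis using 0 by (simp add: algebra_simps mult_2 mult_2_right)
next
  case (Suc k')
  have "fps_X ^ (2 * M) dvd fps_X ^ (2 * k * M)" "fps_X ^ (2 * M) dvd fps_X ^ (2 * (k + 1) * M)"
    by (intro le_imp_power_dvd; simp add: Suc)+
  then have "fps_X ^ (2 * M) dvd f * (fps_X ^ (2 * k * M) + g * fps_X ^ (2 * (k + 1) * M))"
    by (intro dvd_mult dvd_add)
  then show ?thesis using Suc by (simp add: fps_cong_def)
qed

lemma gf_odd_smallest_cong:
  "fps_cong (2 * M) (gf_odd_smallest (Suc k) M)
     (V (Suc k) * (\<Prod>i<M. 1 + fps_X ^ (2 * i + 2))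
      + (- fps_X) ^ Suc k * (\<Prod>j<k. 1 - fps_X ^ (2 * j + 2)))"
proof (rule fps_cong_recurrence_solution[where e = "\<lambda>k. 2 * fps_X ^ Suc k"])
  fix k
  have "fps_cong (2 * M) (fps_X ^ Suc k * (fps_X ^ (2 * k * M) + fps_X ^ (2 * (k + 1) * M)))
      (if k = 0 then fps_X else 0)"
    using fps_cong_boundary_term[of M "fps_X ^ Suc k" k 1] by (simp cong: if_cong)
  then show "fps_cong (2 * M) (gf_odd_smallest (Suc k) M)
      (2 * fps_X ^ Suc k * (\<Prod>i<M. 1 + fps_X ^ (2 * i + 2))
       + (fps_X ^ (2 * k + 1) - fps_X) * gf_odd_smallest k M - (if k = 0 then fps_X else 0))"
    unfolding gf_odd_smallest_Suc by (intro fps_cong_diff fps_cong_refl)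
qed (simp_all add: V_Suc)

lemma gf_even_smallest_cong:
  "fps_cong (2 * M) (gf_even_smallest (Suc k) M)
     (W (Suc k) * (\<Prod>i<Suc M. 1 + fps_X ^ (2 * i + 1))
      + (- fps_X) ^ Suc k * (\<Prod>j<k. 1 - fps_X ^ (2 * j + 2)))"
proof (rule fps_cong_recurrence_solution[where e = "\<lambda>k. fps_X ^ (2 * k + 1)"])
  fix k
  have "fps_cong (2 * M) (fps_X ^ (2 * k + 1) * (fps_X ^ (2 * k * M) + fps_X * fps_X ^ (2 * (k + 1) * M)))
      (if k = 0 then fps_X else 0)"
    using fps_cong_boundary_term[of M "fps_X ^ (2 * k + 1)" k fps_X] by (simp cong: if_cong)
  then show "fps_cong (2 * M) (gf_even_smallest (Suc k) M)
      (fps_X ^ (2 * k + 1) * (\<Prod>i<Suc M. 1 + fps_X ^ (2 * i + 1))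
       + (fps_X ^ (2 * k + 1) - fps_X) * gf_even_smallest k M - (if k = 0 then fps_X else 0))"
    unfolding gf_even_smallest_Suc by (intro fps_cong_diff fps_cong_refl)
qed (simp_all add: W_Suc)

definition spt_decomps :: "nat \<Rightarrow> nat \<Rightarrow> (nat \<times> nat set) set" where
  "spt_decomps k n = {(s, D). 0 < s \<and> finite D \<and> (\<forall>t\<in>D. s < t \<and> t mod 2 \<noteq> s mod 2) \<and> k * s + \<Sum>D = n}"

lemma sum_mset_mset_set: "sum_mset (mset_set A) = \<Sum>A"
  using sum_unfold_sum_mset[of "\<lambda>x. x" A] by simp

lemma Sptk_do_decompose:
  assumes "M \<in> Sptk_do k n"
  defines "s \<equiv> Min (set_mset M)"
  shows "M = replicate_mset k s + mset_set (set_mset M - {s})"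
proof (rule multiset_eqI)
  fix x
  from assms have "count M s = k" "\<forall>x\<in>#M. x \<noteq> s \<longrightarrow> count M x = 1"
    by (auto simp: Sptk_do_def)
  then show "count M x = count (replicate_mset k s + mset_set (set_mset M - {s})) x"
    by (cases "x = s") (auto simp: count_mset_set' not_in_iff)
qed

lemma bij_betw_spt_decomps_Sptk_do:
  assumes "1 \<le> k"
  shows "bij_betw (\<lambda>(s, D). replicate_mset k s + mset_set D) (spt_decomps k n) (Sptk_do k n)"
proof -
  define f :: "nat \<times> nat set \<Rightarrow> nat multiset" where "f = (\<lambda>(s, D). replicate_mset k s + mset_set D)"
  define g where "g M = (Min (set_mset M), set_mset M - {Min (set_mset M)})" for M :: "nat multiset"
  have set_f: "set_mset (f (s, D)) = insert s D" and Min_f: "Min (insert s D) = s"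
    if "(s, D) \<in> spt_decomps k n" for s D
  proof -
    from that have "finite D" "\<forall>t\<in>D. s < t" by (auto simp: spt_decomps_def)
    then show "set_mset (f (s, D)) = insert s D" and "Min (insert s D) = s"
      using assms by (auto simp: f_def intro!: Min_eqI)
  qed
  have "bij_betw f (spt_decomps k n) (Sptk_do k n)"
  proof (rule bij_betw_byWitness[where f' = g])
    show "\<forall>a\<in>spt_decomps k n. g (f a) = a"
    proof clarify
      fix s D assume sD: "(s, D) \<in> spt_decomps k n"
      then have "s \<notin> D" by (auto simp: spt_decomps_def)
      then show "g (f (s, D)) = (s, D)"
        unfolding g_def set_f[OF sD] Min_f[OF sD] by simp
    qed
    show "\<forall>M\<in>Sptk_do k n. f (g M) = M"
      using Sptk_do_decompose by (auto simp: f_def g_def)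
    show "f ` spt_decomps k n \<subseteq> Sptk_do k n"
    proof clarify
      fix s D assume sD: "(s, D) \<in> spt_decomps k n"
      then have D: "finite D" "\<forall>t\<in>D. s < t \<and> t mod 2 \<noteq> s mod 2" "0 < s" "k * s + \<Sum>D = n"
        by (auto simp: spt_decomps_def)
      then have "s \<notin> D" by auto
      then have "count (f (s, D)) x = (if x = s then k else if x \<in> D then 1 else 0)" for x
        using D(1) by (simp add: f_def count_mset_set')
      moreover have "sum_mset (f (s, D)) = k * s + \<Sum>D"
        by (simp add: f_def sum_mset_mset_set)
      moreover have "f (s, D) \<noteq> {#}"
        using set_f[OF sD] by auto
      ultimately show "f (s, D) \<in> Sptk_do k n"
        using D unfolding Sptk_do_def mem_Collect_eq set_f[OF sD] Min_f[OF sD] by auto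
    qed
    show "g ` Sptk_do k n \<subseteq> spt_decomps k n"
    proof (rule image_subsetI)
      fix M assume M: "M \<in> Sptk_do k n"
      define s where "s = Min (set_mset M)"
      define D where "D = set_mset M - {s}"
      from M have "M \<noteq> {#}" "\<forall>x\<in>#M. 0 < x" "sum_mset M = n"
        "\<forall>x\<in>#M. x \<noteq> s \<longrightarrow> x mod 2 \<noteq> s mod 2"
        by (auto simp: Sptk_do_def s_def)
      moreover have "s \<in># M" "\<forall>t\<in>D. s \<le> t"
        using \<open>M \<noteq> {#}\<close> by (auto simp: s_def D_def)
      moreover have "sum_mset M = k * s + \<Sum>D"
        by (subst Sptk_do_decompose[OF M]) (simp add: s_def D_def sum_mset_mset_set)
      ultimately show "g M \<in> spt_decomps k n"
        unfolding spt_decomps_def g_def s_def[symmetric] D_def[symmetric]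
        by (auto simp: D_def le_neq_implies_less)
    qed
  qed
  then show ?thesis by (simp add: f_def)
qed

lemma sptk_do_eq_card_spt_decomps: "1 \<le> k \<Longrightarrow> sptk_do k n = card (spt_decomps k n)"
  unfolding sptk_do_def by (metis bij_betw_same_card bij_betw_spt_decomps_Sptk_do)

lemma spt_decomps_0: "1 \<le> k \<Longrightarrow> spt_decomps k 0 = {}"
  by (auto simp: spt_decomps_def)

definition opposite_parity_above :: "nat \<Rightarrow> nat \<Rightarrow> nat set" where
  "opposite_parity_above s N = {t. s < t \<and> t \<le> N \<and> t mod 2 \<noteq> s mod 2}"

lemma opposite_parity_above_odd:
  "opposite_parity_above (2 * m + 1) (2 * M + 1) = (\<lambda>i. 2 * i + 2) ` {m..<M}"
proof (intro equalityI subsetI)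
  fix t assume "t \<in> opposite_parity_above (2 * m + 1) (2 * M + 1)"
  then obtain q where "t = 2 * q" "m < q" "q \<le> M"
    by (auto simp: opposite_parity_above_def elim!: evenE)
  then have "t = 2 * (q - 1) + 2" "q - 1 \<in> {m..<M}" by auto
  then show "t \<in> (\<lambda>i. 2 * i + 2) ` {m..<M}" by blast
qed (auto simp: opposite_parity_above_def)

lemma opposite_parity_above_even:
  "opposite_parity_above (2 * m + 2) (2 * M + 1) = (\<lambda>i. 2 * i + 3) ` {m..<M}"
proof (intro equalityI subsetI)
  fix t assume "t \<in> opposite_parity_above (2 * m + 2) (2 * M + 1)"
  then have t: "odd t" "2 * m + 2 < t" "t \<le> 2 * M + 1"
    by (auto simp: opposite_parity_above_def odd_iff_mod_2_eq_one)
  then obtain q where "t = 2 * q + 1" by (blast elim: oddE)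
  with t have "t = 2 * (q - 1) + 3" "q - 1 \<in> {m..<M}" by auto
  then show "t \<in> (\<lambda>i. 2 * i + 3) ` {m..<M}" by blast
qed (auto simp: opposite_parity_above_def)

lemma sum_atLeast1_atMost_double:
  fixes f :: "nat \<Rightarrow> 'a::comm_monoid_add"
  shows "(\<Sum>s\<in>{1..2 * M}. f s) = (\<Sum>m<M. f (2 * m + 1) + f (2 * m + 2))"
proof (induction M)
  case (Suc M)
  have "{1..2 * Suc M} = insert (2 * M + 2) (insert (2 * M + 1) {1..2 * M})" by auto
  then show ?case using Suc by (simp add: algebra_simps)
qed simp

lemma gf_smallest_sum:
  "gf_odd_smallest k M + gf_even_smallest k M
     = (\<Sum>s\<in>{1..2 * M}. fps_X ^ (k * s) * (\<Prod>t\<in>opposite_parity_above s (2 * M + 1). 1 + fps_X ^ t))"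
proof -
  have "(\<Prod>t\<in>opposite_parity_above (2 * m + 1) (2 * M + 1). 1 + fps_X ^ t)
      = (\<Prod>i\<in>{m..<M}. 1 + fps_X ^ (2 * i + 2) :: int fps)"
    "(\<Prod>t\<in>opposite_parity_above (2 * m + 2) (2 * M + 1). 1 + fps_X ^ t)
      = (\<Prod>i\<in>{m..<M}. 1 + fps_X ^ (2 * i + 3) :: int fps)" for m
    unfolding opposite_parity_above_odd opposite_parity_above_even
    by (simp_all add: prod.reindex inj_on_def)
  then show ?thesis
    by (simp only: sum_atLeast1_atMost_double gf_odd_smallest_def gf_even_smallest_def sum.distrib)
qed

lemma nth_gf_smallest_sum:
  assumes "1 \<le> k" and "n \<le> 2 * M"
  shows "(gf_odd_smallest k M + gf_even_smallest k M) $ n = int (card (spt_decomps k n))"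
proof -
  define A where "A s = opposite_parity_above s (2 * M + 1)" for s
  define F where "F s = {D. D \<subseteq> A s \<and> k * s + \<Sum>D = n}" for s
  have finite_A: "finite (A s)" for s
    by (auto simp: A_def opposite_parity_above_def)
  have finite_F: "finite (F s)" for s
    using finite_A by (auto simp: F_def intro: finite_subset[of _ "Pow (A s)"])
  have nth_term: "(fps_X ^ (k * s) * (\<Prod>t\<in>A s. 1 + fps_X ^ t)) $ n = int (card (F s))" for s
  proof (cases "k * s \<le> n")
    case True
    then have "F s = {D. D \<subseteq> A s \<and> \<Sum>D = n - k * s}" by (auto simp: F_def)
    then show ?thesis
      using True by (simp add: fps_X_power_mult_nth fps_prod_one_plus_X_power_nth finite_A)
  next
    case False
    then have "F s = {}" by (auto simp: F_def)
    then show ?thesis using False by (simp add: fps_X_power_mult_nth)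
  qed
  have "spt_decomps k n = Sigma {1..2 * M} F"
  proof (intro equalityI subsetI)
    fix x assume "x \<in> spt_decomps k n"
    then obtain s D where x: "x = (s, D)" and s: "0 < s" and D: "finite D"
      "\<forall>t\<in>D. s < t \<and> t mod 2 \<noteq> s mod 2" and sum: "k * s + \<Sum>D = n"
      by (auto simp: spt_decomps_def)
    have "s \<le> k * s" using assms(1) by simp
    then have "s \<le> 2 * M" using sum assms(2) by linarith
    moreover have "D \<subseteq> A s"
    proof
      fix t assume "t \<in> D"
      then have "t \<le> \<Sum>D" using D(1) by (intro member_le_sum) auto
      then show "t \<in> A s"
        using \<open>t \<in> D\<close> D(2) sum assms(2) by (auto simp: A_def opposite_parity_above_def)
    qed
    ultimately show "x \<in> Sigma {1..2 * M} F"
      using x s sum by (simp add: F_def)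
  next
    fix x assume "x \<in> Sigma {1..2 * M} F"
    then obtain s D where "x = (s, D)" "1 \<le> s" "D \<subseteq> A s" "k * s + \<Sum>D = n"
      by (auto simp: F_def)
    moreover from \<open>D \<subseteq> A s\<close> have "finite D"
      using finite_A by (rule finite_subset)
    ultimately show "x \<in> spt_decomps k n"
      by (auto simp: spt_decomps_def A_def opposite_parity_above_def)
  qed
  then show ?thesis
    unfolding gf_smallest_sum A_def[symmetric] fps_sum_nth nth_term
    using finite_F by (simp add: card_SigmaI)
qed

lemma spt_gf_cong_gf_smallest_sum:
  assumes "1 \<le> k"
  shows "fps_cong M (Abs_fps (\<lambda>n. if n = 0 then 0 else int (sptk_do k n)))
     (gf_odd_smallest k M + gf_even_smallest k M)"
  unfolding fps_cong_iff_nth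
  using assms nth_gf_smallest_sum[OF assms]
  by (auto simp: sptk_do_eq_card_spt_decomps spt_decomps_0)

lemma gf_smallest_sum_cong:
  assumes "1 \<le> k"
  shows "fps_cong (2 * M) (gf_odd_smallest k M + gf_even_smallest k M)
     (V k * (\<Prod>i<M. 1 + fps_X ^ (2 * i + 2)) + W k * (\<Prod>i<Suc M. 1 + fps_X ^ (2 * i + 1))
      + 2 * (- fps_X) ^ k * (\<Prod>j<k - 1. 1 - fps_X ^ (2 * j + 2)))"
proof -
  from assms obtain j where k: "k = Suc j" by (cases k) auto
  have "fps_cong (2 * M) (gf_odd_smallest k M + gf_even_smallest k M)
     ((V k * (\<Prod>i<M. 1 + fps_X ^ (2 * i + 2)) + (- fps_X) ^ k * (\<Prod>j<k - 1. 1 - fps_X ^ (2 * j + 2)))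
      + (W k * (\<Prod>i<Suc M. 1 + fps_X ^ (2 * i + 1)) + (- fps_X) ^ k * (\<Prod>j<k - 1. 1 - fps_X ^ (2 * j + 2))))"
    unfolding k diff_Suc_1 by (intro fps_cong_add gf_odd_smallest_cong gf_even_smallest_cong)
  then show ?thesis by (simp add: algebra_simps)
qed

theorem theorem3:
  fixes k :: nat
  assumes "1 \<le> k"
  shows "Abs_fps (\<lambda>n. if n = 0 then 0 else int (sptk_do k n)) =
           V k * fps_infprod (\<lambda>j. 1 + fps_X ^ (2 * j + 2))
         + W k * fps_infprod (\<lambda>j. 1 + fps_X ^ (2 * j + 1))
         + 2 * (- fps_X) ^ k * (\<Prod>j<k - 1. 1 - fps_X ^ (2 * j + 2))"
proof (rule fps_cong_imp_eq)
  let "?lhs = ?rhs" = ?thesis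
  fix M
  define P2 where "P2 = (\<Prod>i<M. 1 + fps_X ^ (2 * i + 2) :: int fps)"
  define P1 where "P1 = (\<Prod>i<Suc M. 1 + fps_X ^ (2 * i + 1) :: int fps)"
  have P2: "fps_cong M P2 (fps_infprod (\<lambda>j. 1 + fps_X ^ (2 * j + 2)))"
    and P1: "fps_cong (Suc M) P1 (fps_infprod (\<lambda>j. 1 + fps_X ^ (2 * j + 1)))"
    unfolding P1_def P2_def
    by (rule fps_cong_sym, rule fps_cong_fps_infprod, rule fps_cong_one_plus_X_power, simp)+
  have "fps_cong M ?lhs (gf_odd_smallest k M + gf_even_smallest k M)"
    using assms by (rule spt_gf_cong_gf_smallest_sum)
  also have "fps_cong M \<dots> (V k * P2 + W k * P1 + 2 * (- fps_X) ^ k * (\<Prod>j<k - 1. 1 - fps_X ^ (2 * j + 2)))"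
    using gf_smallest_sum_cong[OF assms, of M] unfolding P1_def P2_def
    by (rule fps_cong_mono) simp
  also have "fps_cong M \<dots> ?rhs"
    using fps_cong_mono[OF P1] by (intro fps_cong_add fps_cong_mult fps_cong_refl P2) simp
  finally show "fps_cong M ?lhs ?rhs" .
qed

end
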